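(* Fix $\mu\in(0,\mu_0]$. Let $H(t,\mu)$ be a Hermitian $2\times2$ matrix solution of the boundary value problem $$\frac{d}{dt}H+HA(t,\mu)+A^*(t,\mu)H=-I,\quad 0\le t\le T,\qquad H(0,\mu)=H(T,\mu)>0,$$ and put $h_{\max}(\mu)=\max_{0\le t\le T}\|H(t,\mu)\|$. Let $\Delta\alpha,\Delta\hat\beta\in\mathbb{R}$ be constants and $\Delta\hat\varphi:[0,\infty)\to\mathbb{R}$ a bounded continuous function such that $$\mu\sup_{t\ge0}|\Delta\hat\varphi(t)|<\frac{1}{4h_{\max}(\mu)},\qquad \mu\big(|\Delta\hat\beta|\mu+|\Delta\alpha|\big)<\frac{1}{4h_{\max}(\mu)}.$$ Then the zero solution of the perturbed equation $$\bar y''+(\alpha+\Delta\alpha)\mu\bar y'+\big((\hat\beta+\Delta\hat\beta)\mu^2+\mu(\hat\varphi(t)+\Delta\hat\varphi(t))\big)\bar y=0,\qquad t>0,$$ is asymptotically stable.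
   Context: Let $T>0$, $\alpha>0$, $\hat\beta<0$ be constants and $\hat\varphi:\mathbb{R}\to\mathbb{R}$ a continuous $T$-periodic function with $\int_0^T\hat\varphi(s)\,ds=0$ satisfying $$\frac{1}{T}\int_0^T\Big(\int_0^\tau\hat\varphi(s)\,ds\Big)^2d\tau>\Big(\frac{1}{T}\int_0^T\tau\,\hat\varphi(\tau)\,d\tau\Big)^2-\hat\beta .$$ For $\mu>0$ let $A(t,\mu)=\begin{pmatrix}0&1\\-(\hat\beta\mu^2+\mu\hat\varphi(t))&-\alpha\mu\end{pmatrix}$, so that the equation $y''+\alpha\mu y'+(\hat\beta\mu^2+\mu\hat\varphi(t))y=0$ is equivalent to $v'=A(t,\mu)v$ with $v=(y,y')^T$. Let $\mu_0>0$ be a number such that the zero solution of this equation is asymptotically stable for every $\mu\in(0,\mu_0]$ (such a number exists). $\|\cdot\|$ denotes the Euclidean vector norm and the induced (spectral) matrix norm; $A^*$ is the conjugate transpose. *)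

theory Defs
  imports "HOL-Analysis.Analysis"
begin

text \<open>The coefficient matrix A(t,mu) of the first-order system equivalent to
  y'' + alpha mu y' + (beta mu^2 + mu phi(t)) y = 0, as a complex 2x2 matrix.\<close>
definition Amat :: "real \<Rightarrow> real \<Rightarrow> (real \<Rightarrow> real) \<Rightarrow> real \<Rightarrow> real \<Rightarrow> complex^2^2" where
  "Amat alpha beta phi t mu =
     vector [vector [0, 1],
             vector [complex_of_real (-(beta * mu^2 + mu * phi t)), complex_of_real (-(alpha * mu))]]"

definition adj :: "complex^'n^'m \<Rightarrow> complex^'m^'n" where
  "adj M = (\<chi> i j. cnj (M $ j $ i))"

definition hermitian :: "complex^'n^'n \<Rightarrow> bool" where
  "hermitian M \<longleftrightarrow> adj M = M"

definition pos_def :: "complex^'n^'n \<Rightarrow> bool" where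
  "pos_def M \<longleftrightarrow> hermitian M \<and>
     (\<forall>v::complex^'n. v \<noteq> 0 \<longrightarrow> Re (\<Sum>i\<in>UNIV. cnj (v $ i) * (M *v v) $ i) > 0)"

definition spec_norm :: "complex^'n^'m \<Rightarrow> real" where
  "spec_norm M = onorm (\<lambda>v::complex^'n. M *v v)"

text \<open>(y,z) solves y' = z, z' = -p(t) z - q(t) y on [t0,\<infinity>), i.e. y solves
  y'' + p(t) y' + q(t) y = 0 for t \<ge> t0 with z = y'.\<close>
definition sol2 :: "(real \<Rightarrow> real) \<Rightarrow> (real \<Rightarrow> real) \<Rightarrow> real \<Rightarrow> (real \<Rightarrow> real) \<Rightarrow> (real \<Rightarrow> real) \<Rightarrow> bool" where
  "sol2 p q t0 y z \<longleftrightarrow>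
     (\<forall>t\<ge>t0. (y has_real_derivative z t) (at t within {t0..}) \<and>
             (z has_real_derivative (- p t * z t - q t * y t)) (at t within {t0..}))"

definition asymp_stable2 :: "(real \<Rightarrow> real) \<Rightarrow> (real \<Rightarrow> real) \<Rightarrow> bool" where
  "asymp_stable2 p q \<longleftrightarrow>
     (\<forall>t0\<ge>0.
        (\<forall>\<epsilon>>0. \<exists>\<delta>>0. \<forall>y z. sol2 p q t0 y z \<and> norm (y t0, z t0) < \<delta> \<longrightarrow>
              (\<forall>t\<ge>t0. norm (y t, z t) < \<epsilon>)) \<and>
        (\<exists>\<delta>>0. \<forall>y z. sol2 p q t0 y z \<and> norm (y t0, z t0) < \<delta> \<longrightarrow>
              ((\<lambda>t. (y t, z t)) \<longlongrightarrow> 0) at_top))"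

end

theory Submission
  imports Defs
begin

(* For the unperturbed system v' = A(t) v, the periodic Hermitian solution H of
   H' + H A + A* H = -I makes V(t, v) = v* H(t) v a Lyapunov function with dV/dt = -|v|^2.
   The perturbation changes dV/dt by a cross term of size at most
   2 h_max (|Delta alpha| mu + |Delta beta| mu^2 + mu |Delta phi|) |v|^2 < |v|^2, so V still
   drops by a fixed fraction of |v|^2 over every period [nT, nT + T]; as H(0) = H(T), the values
   of V at the multiples of T decay geometrically, and a Gronwall estimate on each period
   controls |v| in between. *)

section \<open>Gronwall estimates along solutions\<close>

lemma has_real_derivative_nonpos_imp_le:
  fixes f f' :: "real \<Rightarrow> real"
  assumes "a \<le> b"
    and deriv: "\<And>x. x \<in> {a..b} \<Longrightarrow> (f has_real_derivative f' x) (at x within {a..b})"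
    and nonpos: "\<And>x. x \<in> {a..b} \<Longrightarrow> f' x \<le> 0"
  shows "f b \<le> f a"
proof (rule DERIV_nonpos_imp_decreasing_open[OF \<open>a \<le> b\<close>])
  fix x assume x: "a < x" "x < b"
  then have "(f has_real_derivative f' x) (at x)"
    using deriv[of x] by (simp add: at_within_Icc_at)
  then show "\<exists>y. (f has_real_derivative y) (at x) \<and> y \<le> 0"
    using nonpos[of x] x by auto
next
  show "continuous_on {a..b} f"
    unfolding continuous_on_eq_continuous_within using deriv DERIV_continuous by blast
qed

text \<open>Gronwall's inequality in both time directions, proved by monotonicity of
  \<open>N x * exp (\<mp>L * x)\<close>.\<close>
lemma exp_bounds_of_derivative_bound:
  fixes N N' :: "real \<Rightarrow> real"
  assumes "a \<le> b"
    and deriv: "\<And>x. x \<in> {a..b} \<Longrightarrow> (N has_real_derivative N' x) (at x within {a..b})"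
    and bound: "\<And>x. x \<in> {a..b} \<Longrightarrow> \<bar>N' x\<bar> \<le> L * N x"
  shows "N b \<le> exp (L * (b - a)) * N a" and "exp (- (L * (b - a))) * N a \<le> N b"
proof -
  have "(\<lambda>x. N x * exp (- L * x)) b \<le> (\<lambda>x. N x * exp (- L * x)) a"
  proof (rule has_real_derivative_nonpos_imp_le[OF \<open>a \<le> b\<close>])
    fix x assume x: "x \<in> {a..b}"
    show "((\<lambda>x. N x * exp (- L * x)) has_real_derivative
            N' x * exp (- L * x) + N x * (exp (- L * x) * (- L))) (at x within {a..b})"
      by (auto intro!: derivative_eq_intros deriv[OF x])
    have "N' x \<le> L * N x" using bound[OF x] by auto
    then show "N' x * exp (- L * x) + N x * (exp (- L * x) * (- L)) \<le> 0"
      by (simp add: algebra_simps mult_right_mono)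
  qed
  then have "N b * exp (- L * b) * exp (L * b) \<le> N a * exp (- L * a) * exp (L * b)"
    by (simp add: mult_right_mono)
  then show "N b \<le> exp (L * (b - a)) * N a"
    by (simp add: mult.assoc flip: exp_add) (simp add: algebra_simps)
  have "(\<lambda>x. - (N x * exp (L * x))) b \<le> (\<lambda>x. - (N x * exp (L * x))) a"
  proof (rule has_real_derivative_nonpos_imp_le[OF \<open>a \<le> b\<close>])
    fix x assume x: "x \<in> {a..b}"
    show "((\<lambda>x. - (N x * exp (L * x))) has_real_derivative
            - (N' x * exp (L * x) + N x * (exp (L * x) * L))) (at x within {a..b})"
      by (auto intro!: derivative_eq_intros deriv[OF x])
    have "- N' x \<le> L * N x" using bound[OF x] by auto
    from mult_right_mono[OF this, of "exp (L * x)"]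
    show "- (N' x * exp (L * x) + N x * (exp (L * x) * L)) \<le> 0"
      by (simp add: algebra_simps)
  qed
  then have "N a * exp (L * a) * exp (- L * b) \<le> N b * exp (L * b) * exp (- L * b)"
    by (simp add: mult_right_mono)
  then show "exp (- (L * (b - a))) * N a \<le> N b"
    by (simp add: mult.assoc flip: exp_add) (simp add: algebra_simps)
qed

lemma sol2_has_derivative_within:
  assumes sol: "sol2 P Q t0 y z" and "t0 \<le> a" and s: "s \<in> {a..b}"
  shows "(y has_real_derivative z s) (at s within {a..b})"
    and "(z has_real_derivative (- P s * z s - Q s * y s)) (at s within {a..b})"
proof -
  have "s \<ge> t0" "{a..b} \<subseteq> {t0..}" using \<open>t0 \<le> a\<close> s by auto
  then show "(y has_real_derivative z s) (at s within {a..b})"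
    and "(z has_real_derivative (- P s * z s - Q s * y s)) (at s within {a..b})"
    using sol unfolding sol2_def by (meson has_field_derivative_subset)+
qed

lemma energy_derivative_bound:
  fixes y z P Q Pb Qb :: real
  assumes "\<bar>P\<bar> \<le> Pb" "\<bar>Q\<bar> \<le> Qb"
  shows "\<bar>2 * y * z + 2 * z * (- P * z - Q * y)\<bar> \<le> (1 + Qb + 2 * Pb) * (y\<^sup>2 + z\<^sup>2)"
proof -
  have yz: "\<bar>2 * y * z\<bar> \<le> y\<^sup>2 + z\<^sup>2"
  proof -
    have "0 \<le> (y - z)\<^sup>2" "0 \<le> (y + z)\<^sup>2" by auto
    then show ?thesis by (simp add: power2_diff power2_sum abs_le_iff)
  qed
  have "\<bar>2 * z * (Q * y)\<bar> = \<bar>Q\<bar> * \<bar>2 * y * z\<bar>" by (simp add: abs_mult)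
  also have "\<dots> \<le> Qb * (y\<^sup>2 + z\<^sup>2)" using yz assms(2) by (intro mult_mono) auto
  finally have Qyz: "\<bar>2 * z * (Q * y)\<bar> \<le> Qb * (y\<^sup>2 + z\<^sup>2)" .
  have "\<bar>2 * z * (P * z)\<bar> = 2 * \<bar>P\<bar> * z\<^sup>2" by (simp add: abs_mult power2_eq_square)
  also have "\<dots> \<le> 2 * Pb * (y\<^sup>2 + z\<^sup>2)" using assms(1) by (intro mult_mono) auto
  finally have Pzz: "\<bar>2 * z * (P * z)\<bar> \<le> 2 * Pb * (y\<^sup>2 + z\<^sup>2)" .
  have "2 * y * z + 2 * z * (- P * z - Q * y) = 2 * y * z - 2 * z * (P * z) - 2 * z * (Q * y)"
    by (simp add: algebra_simps)
  then show ?thesis using yz Qyz Pzz by (simp add: abs_le_iff algebra_simps)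
qed

lemma sol2_energy_exp_bounds:
  assumes sol: "sol2 P Q t0 y z"
    and P: "\<And>s. s \<ge> t0 \<Longrightarrow> \<bar>P s\<bar> \<le> Pb" and Q: "\<And>s. s \<ge> t0 \<Longrightarrow> \<bar>Q s\<bar> \<le> Qb"
    and "t0 \<le> a" "a \<le> b"
  shows "(y b)\<^sup>2 + (z b)\<^sup>2 \<le> exp ((1 + Qb + 2 * Pb) * (b - a)) * ((y a)\<^sup>2 + (z a)\<^sup>2)"
    and "exp (- ((1 + Qb + 2 * Pb) * (b - a))) * ((y a)\<^sup>2 + (z a)\<^sup>2) \<le> (y b)\<^sup>2 + (z b)\<^sup>2"
proof -
  let ?N = "\<lambda>s. (y s)\<^sup>2 + (z s)\<^sup>2"
  let ?N' = "\<lambda>s. 2 * y s * z s + 2 * z s * (- P s * z s - Q s * y s)"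
  have deriv: "(?N has_real_derivative ?N' s) (at s within {a..b})" if "s \<in> {a..b}" for s
    by (rule derivative_eq_intros sol2_has_derivative_within[OF sol \<open>t0 \<le> a\<close> that] refl
        | simp add: algebra_simps)+
  have bound: "\<bar>?N' s\<bar> \<le> (1 + Qb + 2 * Pb) * ?N s" if "s \<in> {a..b}" for s
    using that \<open>t0 \<le> a\<close> by (intro energy_derivative_bound P Q) auto
  show "?N b \<le> exp ((1 + Qb + 2 * Pb) * (b - a)) * ?N a"
    and "exp (- ((1 + Qb + 2 * Pb) * (b - a))) * ?N a \<le> ?N b"
    using exp_bounds_of_derivative_bound[OF \<open>a \<le> b\<close> deriv bound] by blast+
qed

lemma sol2_energy_window_bounds:
  assumes sol: "sol2 P Q t0 y z"
    and P: "\<And>s. s \<ge> t0 \<Longrightarrow> \<bar>P s\<bar> \<le> Pb" and Q: "\<And>s. s \<ge> t0 \<Longrightarrow> \<bar>Q s\<bar> \<le> Qb"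
    and s: "t0 \<le> a" "a \<le> s" "s \<le> a + T"
  shows "(y s)\<^sup>2 + (z s)\<^sup>2 \<le> exp ((1 + Qb + 2 * Pb) * T) * ((y a)\<^sup>2 + (z a)\<^sup>2)"
    and "exp (- ((1 + Qb + 2 * Pb) * T)) * ((y a)\<^sup>2 + (z a)\<^sup>2) \<le> (y s)\<^sup>2 + (z s)\<^sup>2"
proof -
  have "0 \<le> 1 + Qb + 2 * Pb" using P[of t0] Q[of t0] by simp
  then have "(1 + Qb + 2 * Pb) * (s - a) \<le> (1 + Qb + 2 * Pb) * T" using s by (intro mult_left_mono) auto
  then show "(y s)\<^sup>2 + (z s)\<^sup>2 \<le> exp ((1 + Qb + 2 * Pb) * T) * ((y a)\<^sup>2 + (z a)\<^sup>2)"
    and "exp (- ((1 + Qb + 2 * Pb) * T)) * ((y a)\<^sup>2 + (z a)\<^sup>2) \<le> (y s)\<^sup>2 + (z s)\<^sup>2"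
    using sol2_energy_exp_bounds[OF sol P Q s(1,2)]
    by (smt (verit, best) exp_le_cancel_iff mult_right_mono zero_le_power2)+
qed

section \<open>Sampling at the multiples of the period\<close>

lemma floor_divide_bracket:
  fixes t T :: real
  assumes "0 \<le> t" "0 < T"
  shows "real (nat \<lfloor>t / T\<rfloor>) * T \<le> t" and "t < real (nat \<lfloor>t / T\<rfloor>) * T + T"
proof -
  have n: "real (nat \<lfloor>t / T\<rfloor>) = of_int \<lfloor>t / T\<rfloor>" using assms by simp
  have "of_int \<lfloor>t / T\<rfloor> \<le> t / T" "t / T < of_int \<lfloor>t / T\<rfloor> + 1" by linarith+
  then show "real (nat \<lfloor>t / T\<rfloor>) * T \<le> t" and "t < real (nat \<lfloor>t / T\<rfloor>) * T + T"
    unfolding n using assms by (simp_all add: le_divide_eq divide_less_eq algebra_simps)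
qed

lemma ceiling_divide_bracket:
  fixes t T :: real
  assumes "0 \<le> t" "0 < T"
  shows "t \<le> real (nat \<lceil>t / T\<rceil>) * T" and "real (nat \<lceil>t / T\<rceil>) * T \<le> t + T"
proof -
  have n: "real (nat \<lceil>t / T\<rceil>) = of_int \<lceil>t / T\<rceil>" using assms by simp
  from le_of_int_ceiling[of "t / T"] assms show "t \<le> real (nat \<lceil>t / T\<rceil>) * T"
    unfolding n by (simp only: pos_divide_le_eq)
  have "of_int \<lceil>t / T\<rceil> \<le> t / T + 1" by linarith
  then have "of_int \<lceil>t / T\<rceil> \<le> (t + T) / T" using assms by (simp add: add_divide_distrib)
  then show "real (nat \<lceil>t / T\<rceil>) * T \<le> t + T" unfolding n using assms by (simp add: le_divide_eq)
qed

lemma filterlim_nat_floor_divide_at_top: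
  fixes T :: real
  assumes "T > 0"
  shows "filterlim (\<lambda>t. nat \<lfloor>t / T\<rfloor> - n0) sequentially at_top"
  unfolding filterlim_at_top eventually_at_top_linorder
proof (intro allI exI allI impI)
  fix K :: nat and t :: real
  assume "real (n0 + K) * T \<le> t"
  then have "real (n0 + K) \<le> t / T" using assms by (simp add: le_divide_eq)
  then show "K \<le> nat \<lfloor>t / T\<rfloor> - n0" by linarith
qed

lemma contraction_imp_geometric:
  fixes a :: "nat \<Rightarrow> real"
  assumes step: "\<And>n. n0 \<le> n \<Longrightarrow> a (Suc n) \<le> \<rho> * a n" and "0 \<le> \<rho>" and "n0 \<le> n"
  shows "a n \<le> \<rho> ^ (n - n0) * a n0"
  using \<open>n0 \<le> n\<close>
proof (induction n rule: dec_induct)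
  case (step n)
  have "a (Suc n) \<le> \<rho> * (\<rho> ^ (n - n0) * a n0)"
    using step.hyps(1) mult_left_mono[OF step.IH \<open>0 \<le> \<rho>\<close>] by (meson assms(1) order_trans)
  then show ?case using step.hyps(1) by (simp add: Suc_diff_le)
qed simp

lemma periodic_shift_nat:
  assumes per: "\<And>t. f (t + T) = f t"
  shows "f (t + real n * T) = f t"
proof (induction n)
  case (Suc n)
  have "f (t + real (Suc n) * T) = f ((t + real n * T) + T)" by (simp add: algebra_simps)
  also have "\<dots> = f t" using per Suc by simp
  finally show ?case .
qed simp

lemma periodic_continuous_bounded:
  fixes f :: "real \<Rightarrow> real"
  assumes T: "T > 0" and cont: "continuous_on UNIV f" and per: "\<And>t. f (t + T) = f t"
  obtains B where "\<And>s. s \<ge> 0 \<Longrightarrow> \<bar>f s\<bar> \<le> B"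
proof -
  have "compact (f ` {0..T})"
    by (rule compact_continuous_image) (use cont continuous_on_subset in auto)
  then obtain B where B: "\<And>x. x \<in> {0..T} \<Longrightarrow> \<bar>f x\<bar> \<le> B"
    by (metis compact_imp_bounded Elementary_Metric_Spaces.bounded_iff image_eqI real_norm_def)
  have "\<bar>f s\<bar> \<le> B" if s: "s \<ge> 0" for s
  proof -
    define n where "n = nat \<lfloor>s / T\<rfloor>"
    have "s - real n * T \<in> {0..T}"
      using floor_divide_bracket[OF s T] unfolding n_def by auto
    moreover have "f s = f (s - real n * T)"
      using periodic_shift_nat[of f T "s - real n * T" n] per by simp
    ultimately show ?thesis using B by simp
  qed
  then show ?thesis using that by blast
qed

section \<open>Decrease of the Lyapunov function over one period\<close>

lemma has_real_derivative_within_shift: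
  fixes f f' :: "real \<Rightarrow> real"
  assumes deriv: "\<And>s. s \<in> {0..T} \<Longrightarrow> (f has_real_derivative f' s) (at s within {0..T})"
    and s: "s \<in> {a..a+T}"
  shows "((\<lambda>s. f (s - a)) has_real_derivative f' (s - a)) (at s within {a..a+T})"
proof -
  have "(\<lambda>s. s - a) ` {a..a+T} = {0..T}" by (simp add: image_minus_const_atLeastAtMost')
  with deriv[of "s - a"] s
  have "(f has_real_derivative f' (s - a)) (at (s - a) within (\<lambda>s. s - a) ` {a..a+T})" by simp
  moreover have "((\<lambda>s. s - a) has_real_derivative 1) (at s within {a..a+T})"
    by (auto intro!: derivative_eq_intros)
  ultimately show ?thesis using DERIV_image_chain by (fastforce simp: o_def)
qed

lemma perturbation_cross_term_bound:
  fixes q r Y Z dP dQ :: real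
  assumes row: "\<bar>q * Y + r * Z\<bar> \<le> h * sqrt (Y\<^sup>2 + Z\<^sup>2)" and h: "h \<ge> 0"
    and D: "\<bar>dP\<bar> + \<bar>dQ\<bar> \<le> D"
  shows "\<bar>2 * (q * Y + r * Z) * (- dP * Z - dQ * Y)\<bar> \<le> 2 * h * D * (Y\<^sup>2 + Z\<^sup>2)"
proof -
  define S where "S = sqrt (Y\<^sup>2 + Z\<^sup>2)"
  have SS: "S * S = Y\<^sup>2 + Z\<^sup>2" and S0: "S \<ge> 0" unfolding S_def by simp_all
  have YS: "\<bar>Y\<bar> \<le> S" and ZS: "\<bar>Z\<bar> \<le> S" unfolding S_def by (simp_all add: real_le_rsqrt)
  have "\<bar>- dP * Z - dQ * Y\<bar> \<le> \<bar>dP\<bar> * \<bar>Z\<bar> + \<bar>dQ\<bar> * \<bar>Y\<bar>"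
    using abs_triangle_ineq4[of "- dP * Z" "dQ * Y"] by (simp only: abs_mult abs_minus_cancel mult_minus_left)
  also have "\<dots> \<le> (\<bar>dP\<bar> + \<bar>dQ\<bar>) * S"
    using YS ZS by (simp add: distrib_right add_mono mult_left_mono)
  also have "\<dots> \<le> D * S" using D S0 by (simp add: mult_right_mono)
  finally have "\<bar>- dP * Z - dQ * Y\<bar> \<le> D * S" .
  then have "\<bar>2 * (q * Y + r * Z) * (- dP * Z - dQ * Y)\<bar> \<le> 2 * (h * S) * (D * S)"
    unfolding abs_mult using row unfolding S_def[symmetric] by (intro mult_mono) auto
  also have "\<dots> = 2 * h * D * (Y\<^sup>2 + Z\<^sup>2)" by (simp flip: SS)
  finally show ?thesis .
qed

text \<open>Along a solution on \<open>[a, a+T]\<close>, the quadratic form of \<open>H(s - a)\<close> at \<open>(y, z)\<close> has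
  derivative \<open>-(y\<^sup>2 + z\<^sup>2) + 2 (q y + r z) w\<close>, where \<open>w\<close> is the perturbation of \<open>z'\<close>; the
  cross term uses up at most the fraction \<open>2 h D\<close> of the decrease.\<close>
lemma lyapunov_decrease_over_period:
  fixes p q r p' q' r' k y z P Q :: "real \<Rightarrow> real"
  assumes T: "T > 0"
    and dp: "\<And>s. s \<in> {0..T} \<Longrightarrow> (p has_real_derivative p' s) (at s within {0..T})"
    and dq: "\<And>s. s \<in> {0..T} \<Longrightarrow> (q has_real_derivative q' s) (at s within {0..T})"
    and dr: "\<And>s. s \<in> {0..T} \<Longrightarrow> (r has_real_derivative r' s) (at s within {0..T})"
    and ip: "\<And>s. s \<in> {0..T} \<Longrightarrow> p' s = -1 + 2 * q s * k s"
    and iq: "\<And>s. s \<in> {0..T} \<Longrightarrow> q' s = - p s + q s * c + r s * k s"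
    and ir: "\<And>s. s \<in> {0..T} \<Longrightarrow> r' s = -1 - 2 * q s + 2 * r s * c"
    and row_bound: "\<And>s u v. s \<in> {0..T} \<Longrightarrow> \<bar>q s * u + r s * v\<bar> \<le> h * sqrt (u\<^sup>2 + v\<^sup>2)"
    and h: "h \<ge> 0"
    and dy: "\<And>s. s \<in> {a..a+T} \<Longrightarrow> (y has_real_derivative z s) (at s within {a..a+T})"
    and dz: "\<And>s. s \<in> {a..a+T} \<Longrightarrow>
               (z has_real_derivative (- P s * z s - Q s * y s)) (at s within {a..a+T})"
    and close: "\<And>s. s \<in> {a..a+T} \<Longrightarrow> \<bar>P s - c\<bar> + \<bar>Q s - k (s - a)\<bar> \<le> D"
    and small: "2 * h * D \<le> 1"
    and lower: "\<And>s. s \<in> {a..a+T} \<Longrightarrow> \<gamma> * ((y a)\<^sup>2 + (z a)\<^sup>2) \<le> (y s)\<^sup>2 + (z s)\<^sup>2"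
  shows "p T * (y (a+T))\<^sup>2 + 2 * q T * y (a+T) * z (a+T) + r T * (z (a+T))\<^sup>2
         \<le> p 0 * (y a)\<^sup>2 + 2 * q 0 * y a * z a + r 0 * (z a)\<^sup>2
            - (1 - 2 * h * D) * \<gamma> * T * ((y a)\<^sup>2 + (z a)\<^sup>2)"
proof -
  define C where "C = (1 - 2 * h * D) * \<gamma> * ((y a)\<^sup>2 + (z a)\<^sup>2)"
  define W where "W s = p (s - a) * (y s)\<^sup>2 + 2 * q (s - a) * y s * z s + r (s - a) * (z s)\<^sup>2
      + C * (s - a)" for s
  define W' where "W' s = - ((y s)\<^sup>2 + (z s)\<^sup>2) + 2 * (q (s - a) * y s + r (s - a) * z s)
      * (- (P s - c) * z s - (Q s - k (s - a)) * y s) + C" for s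
  have "W (a + T) \<le> W a"
  proof (rule has_real_derivative_nonpos_imp_le[of a "a+T" W W'])
    show "a \<le> a + T" using T by simp
    fix s assume s: "s \<in> {a..a+T}"
    then have s0: "s - a \<in> {0..T}" by auto
    note shift = has_real_derivative_within_shift[OF _ s]
    have "(W has_real_derivative
            p' (s - a) * (y s)\<^sup>2 + p (s - a) * (2 * y s * z s)
          + 2 * (q' (s - a) * y s * z s + q (s - a) * z s * z s
                 + q (s - a) * y s * (- P s * z s - Q s * y s))
          + r' (s - a) * (z s)\<^sup>2 + r (s - a) * (2 * z s * (- P s * z s - Q s * y s)) + C)
          (at s within {a..a+T})"
      unfolding W_def
      by (rule derivative_eq_intros shift[OF dp] shift[OF dq] shift[OF dr] dy[OF s] dz[OF s] refl
          | simp add: algebra_simps)+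
    then show "(W has_real_derivative W' s) (at s within {a..a+T})"
      unfolding W'_def using ip[OF s0] iq[OF s0] ir[OF s0]
      by (simp add: power2_eq_square algebra_simps)
    have cross: "\<bar>2 * (q (s - a) * y s + r (s - a) * z s) * (- (P s - c) * z s - (Q s - k (s - a)) * y s)\<bar>
        \<le> 2 * h * D * ((y s)\<^sup>2 + (z s)\<^sup>2)"
      by (rule perturbation_cross_term_bound[OF row_bound[OF s0] h close[OF s]])
    have "C \<le> (1 - 2 * h * D) * ((y s)\<^sup>2 + (z s)\<^sup>2)"
      unfolding C_def using mult_left_mono[OF lower[OF s], of "1 - 2 * h * D"] small
      by (simp add: mult.assoc)
    with cross show "W' s \<le> 0" unfolding W'_def by (simp add: algebra_simps abs_le_iff)
  qed
  then show ?thesis unfolding W_def C_def using T by (simp add: algebra_simps)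
qed

section \<open>From decrease over each period to asymptotic stability\<close>

lemma periodic_decrease_imp_geometric_envelope:
  fixes N V :: "real \<Rightarrow> real"
  assumes T: "T > 0" and t0: "t0 \<ge> 0"
    and N_nonneg: "\<And>t. N t \<ge> 0"
    and growth: "\<And>a s. t0 \<le> a \<Longrightarrow> a \<le> s \<Longrightarrow> s \<le> a + T \<Longrightarrow> N s \<le> E * N a"
    and E: "E \<ge> 0" and m: "m > 0" and h: "h > 0"
    and V_lower: "\<And>t. m * N t \<le> V t" and V_upper: "\<And>t. V t \<le> h * N t"
    and \<kappa>: "\<kappa> > 0"
    and decrease: "\<And>n. t0 \<le> real n * T \<Longrightarrow>
                     V (real n * T + T) \<le> V (real n * T) - \<kappa> * N (real n * T)"
  obtains \<rho> n0 where "0 \<le> \<rho>" "\<rho> < 1" "t0 \<le> real n0 * T" "real n0 * T \<le> t0 + T"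
    "\<And>t. real n0 * T \<le> t \<Longrightarrow> N t \<le> E / m * \<rho> ^ (nat \<lfloor>t / T\<rfloor> - n0) * V (real n0 * T)"
proof -
  define \<rho> where "\<rho> = max 0 (1 - \<kappa> / h)"
  define n0 where "n0 = nat \<lceil>t0 / T\<rceil>"
  have \<rho>: "0 \<le> \<rho>" "\<rho> < 1" unfolding \<rho>_def using \<kappa> h by auto
  note n0 = ceiling_divide_bracket[OF t0 T, folded n0_def]
  have after_n0: "t0 \<le> real n * T" if "n0 \<le> n" for n
  proof -
    have "real n0 * T \<le> real n * T" using that T by (intro mult_right_mono) auto
    then show ?thesis using n0(1) by linarith
  qed
  have V_nonneg: "0 \<le> V t" for t
    using V_lower[of t] mult_nonneg_nonneg[OF less_imp_le[OF m] N_nonneg[of t]] by linarith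
  have step: "V (real (Suc n) * T) \<le> \<rho> * V (real n * T)" if "n0 \<le> n" for n
  proof -
    have "\<kappa> * (V (real n * T) / h) \<le> \<kappa> * N (real n * T)"
      using V_upper[of "real n * T"] h \<kappa> by (intro mult_left_mono) (simp_all add: divide_le_eq mult.commute)
    moreover have "real (Suc n) * T = real n * T + T" by (simp add: algebra_simps)
    ultimately have "V (real (Suc n) * T) \<le> V (real n * T) - \<kappa> * (V (real n * T) / h)"
      using decrease[OF after_n0[OF that]] by simp
    also have "\<dots> = (1 - \<kappa> / h) * V (real n * T)" by (simp add: algebra_simps)
    also have "\<dots> \<le> \<rho> * V (real n * T)" unfolding \<rho>_def using V_nonneg by (intro mult_right_mono) auto
    finally show ?thesis .
  qed
  have geometric: "V (real n * T) \<le> \<rho> ^ (n - n0) * V (real n0 * T)" if "n0 \<le> n" for n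
    by (rule contraction_imp_geometric[where a = "\<lambda>n. V (real n * T)", OF _ \<rho>(1) that])
      (erule step)
  have "N t \<le> E / m * \<rho> ^ (nat \<lfloor>t / T\<rfloor> - n0) * V (real n0 * T)" if t: "real n0 * T \<le> t" for t
  proof -
    define n where "n = nat \<lfloor>t / T\<rfloor>"
    have n: "real n * T \<le> t" "t < real n * T + T"
      using floor_divide_bracket[of t T] t n0 t0 T unfolding n_def by auto
    have "real n0 \<le> t / T" using t T by (simp add: le_divide_eq)
    then have "n0 \<le> n" unfolding n_def by linarith
    have "N t \<le> E * N (real n * T)"
      using growth[OF after_n0[OF \<open>n0 \<le> n\<close>]] n by simp
    also have "\<dots> \<le> E * (V (real n * T) / m)"
      using V_lower m E by (intro mult_left_mono) (simp_all add: le_divide_eq mult.commute)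
    also have "\<dots> \<le> E * (\<rho> ^ (n - n0) * V (real n0 * T) / m)"
      using geometric[OF \<open>n0 \<le> n\<close>] E m by (intro mult_left_mono divide_right_mono) auto
    finally show ?thesis unfolding n_def by (simp add: algebra_simps)
  qed
  with \<rho> n0 that show ?thesis by blast
qed

lemma periodic_decrease_imp_decay:
  fixes N V :: "real \<Rightarrow> real"
  assumes T: "T > 0" and t0: "t0 \<ge> 0"
    and N_nonneg: "\<And>t. N t \<ge> 0"
    and growth: "\<And>a s. t0 \<le> a \<Longrightarrow> a \<le> s \<Longrightarrow> s \<le> a + T \<Longrightarrow> N s \<le> E * N a"
    and E: "E \<ge> 0" and m: "m > 0" and h: "h > 0"
    and V_lower: "\<And>t. m * N t \<le> V t" and V_upper: "\<And>t. V t \<le> h * N t"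
    and \<kappa>: "\<kappa> > 0"
    and decrease: "\<And>n. t0 \<le> real n * T \<Longrightarrow>
                     V (real n * T + T) \<le> V (real n * T) - \<kappa> * N (real n * T)"
  shows "\<And>t. t0 \<le> t \<Longrightarrow> N t \<le> (E + E * E * h / m) * N t0"
    and "(N \<longlongrightarrow> 0) at_top"
proof -
  obtain \<rho> n0 where \<rho>: "0 \<le> \<rho>" "\<rho> < 1" and n0: "t0 \<le> real n0 * T" "real n0 * T \<le> t0 + T"
    and envelope: "\<And>t. real n0 * T \<le> t \<Longrightarrow>
                     N t \<le> E / m * \<rho> ^ (nat \<lfloor>t / T\<rfloor> - n0) * V (real n0 * T)"
    using periodic_decrease_imp_geometric_envelope[OF assms] by blast
  define B where "B = E / m * V (real n0 * T)"
  have B: "0 \<le> B" "B \<le> E * E * h / m * N t0"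
  proof -
    show "0 \<le> B" unfolding B_def using V_lower[of "real n0 * T"] N_nonneg[of "real n0 * T"] m E
      by (smt (verit) divide_nonneg_pos mult_nonneg_nonneg)
    have "V (real n0 * T) \<le> h * (E * N t0)"
      using V_upper[of "real n0 * T"] growth[OF order_refl n0] h by (smt (verit) mult_left_mono)
    then show "B \<le> E * E * h / m * N t0"
      unfolding B_def using E m by (auto simp: algebra_simps intro!: divide_right_mono mult_left_mono)
  qed
  have late: "N t \<le> B * \<rho> ^ (nat \<lfloor>t / T\<rfloor> - n0)" if "real n0 * T \<le> t" for t
    using envelope[OF that] unfolding B_def by (simp add: algebra_simps)
  show "N t \<le> (E + E * E * h / m) * N t0" if t: "t0 \<le> t" for t
  proof (cases "t \<le> real n0 * T")
    case True
    then have "N t \<le> E * N t0" using growth[of t0 t] t n0 by simp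
    then show ?thesis using E h m N_nonneg[of t0] by (simp add: algebra_simps add_increasing2)
  next
    case False
    have "\<rho> ^ (nat \<lfloor>t / T\<rfloor> - n0) \<le> 1" using \<rho> by (simp add: power_le_one)
    then have "N t \<le> B" using late[of t] False B(1) by (smt (verit) mult_left_le)
    then show ?thesis using B(2) mult_nonneg_nonneg[OF E N_nonneg[of t0]]
      unfolding distrib_right by linarith
  qed
  have "((\<lambda>t. B * \<rho> ^ (nat \<lfloor>t / T\<rfloor> - n0)) \<longlongrightarrow> B * 0) at_top"
    using \<rho> filterlim_nat_floor_divide_at_top[OF T]
    by (intro tendsto_mult_left filterlim_compose[OF LIMSEQ_power_zero]) auto
  moreover have "eventually (\<lambda>t. N t \<le> B * \<rho> ^ (nat \<lfloor>t / T\<rfloor> - n0)) at_top"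
    using eventually_ge_at_top[of "real n0 * T"] by (rule eventually_mono) (rule late)
  ultimately show "(N \<longlongrightarrow> 0) at_top"
    using N_nonneg by (intro tendsto_sandwich[of "\<lambda>_. 0" N]) auto
qed

lemma asymp_stable2I:
  assumes C: "C > 0"
    and bound: "\<And>t0 y z t. 0 \<le> t0 \<Longrightarrow> sol2 P Q t0 y z \<Longrightarrow> t0 \<le> t \<Longrightarrow>
                  (y t)\<^sup>2 + (z t)\<^sup>2 \<le> C * ((y t0)\<^sup>2 + (z t0)\<^sup>2)"
    and decay: "\<And>t0 y z. 0 \<le> t0 \<Longrightarrow> sol2 P Q t0 y z \<Longrightarrow>
                  ((\<lambda>t. (y t)\<^sup>2 + (z t)\<^sup>2) \<longlongrightarrow> 0) at_top"
  shows "asymp_stable2 P Q"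
  unfolding asymp_stable2_def
proof (intro allI impI conjI)
  fix t0 :: real and \<epsilon> :: real assume t0: "0 \<le> t0" and \<epsilon>: "\<epsilon> > 0"
  show "\<exists>\<delta>>0. \<forall>y z. sol2 P Q t0 y z \<and> norm (y t0, z t0) < \<delta> \<longrightarrow> (\<forall>t\<ge>t0. norm (y t, z t) < \<epsilon>)"
  proof (intro exI conjI allI impI)
    show "\<epsilon> / sqrt C > 0" using \<epsilon> C by simp
    fix y z t assume yz: "sol2 P Q t0 y z \<and> norm (y t0, z t0) < \<epsilon> / sqrt C" and t: "t0 \<le> t"
    have "sqrt ((y t)\<^sup>2 + (z t)\<^sup>2) \<le> sqrt C * sqrt ((y t0)\<^sup>2 + (z t0)\<^sup>2)"
      using bound[OF t0 _ t] yz by (simp flip: real_sqrt_mult)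
    also have "\<dots> < \<epsilon>" using yz C by (simp add: norm_Pair less_divide_eq mult.commute)
    finally show "norm (y t, z t) < \<epsilon>" by (simp add: norm_Pair)
  qed
next
  fix t0 :: real assume t0: "0 \<le> t0"
  show "\<exists>\<delta>>0. \<forall>y z. sol2 P Q t0 y z \<and> norm (y t0, z t0) < \<delta> \<longrightarrow> ((\<lambda>t. (y t, z t)) \<longlongrightarrow> 0) at_top"
  proof (intro exI[of _ 1] conjI allI impI)
    fix y z assume "sol2 P Q t0 y z \<and> norm (y t0, z t0) < 1"
    then have "((\<lambda>t. sqrt ((y t)\<^sup>2 + (z t)\<^sup>2)) \<longlongrightarrow> sqrt 0) at_top"
      using decay[OF t0] by (intro tendsto_real_sqrt) auto
    then have "((\<lambda>t. norm (y t, z t)) \<longlongrightarrow> 0) at_top" by (simp add: norm_Pair)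
    then show "((\<lambda>t. (y t, z t)) \<longlongrightarrow> 0) at_top" by (simp add: tendsto_norm_zero_iff)
  qed simp
qed

text \<open>\<open>p, q, r\<close> are the real entries of a periodic solution of the Lyapunov equation
  \<open>H' + H A + A\<^sup>* H = -I\<close> for \<open>A = [[0, 1], [-k, -c]]\<close>, and \<open>P, Q\<close> stay within \<open>D\<close> of \<open>c, k\<close>.\<close>
lemma periodic_lyapunov_form_imp_asymp_stable2:
  fixes p q r p' q' r' k P Q :: "real \<Rightarrow> real"
  assumes T: "T > 0"
    and dp: "\<And>s. s \<in> {0..T} \<Longrightarrow> (p has_real_derivative p' s) (at s within {0..T})"
    and dq: "\<And>s. s \<in> {0..T} \<Longrightarrow> (q has_real_derivative q' s) (at s within {0..T})"
    and dr: "\<And>s. s \<in> {0..T} \<Longrightarrow> (r has_real_derivative r' s) (at s within {0..T})"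
    and ip: "\<And>s. s \<in> {0..T} \<Longrightarrow> p' s = -1 + 2 * q s * k s"
    and iq: "\<And>s. s \<in> {0..T} \<Longrightarrow> q' s = - p s + q s * c + r s * k s"
    and ir: "\<And>s. s \<in> {0..T} \<Longrightarrow> r' s = -1 - 2 * q s + 2 * r s * c"
    and per: "p T = p 0" "q T = q 0" "r T = r 0"
    and row_bound: "\<And>s u v. s \<in> {0..T} \<Longrightarrow> \<bar>q s * u + r s * v\<bar> \<le> h * sqrt (u\<^sup>2 + v\<^sup>2)"
    and m: "m > 0"
    and form_lower: "\<And>u v. m * (u\<^sup>2 + v\<^sup>2) \<le> p 0 * u\<^sup>2 + 2 * q 0 * u * v + r 0 * v\<^sup>2"
    and form_upper: "\<And>u v. p 0 * u\<^sup>2 + 2 * q 0 * u * v + r 0 * v\<^sup>2 \<le> h * (u\<^sup>2 + v\<^sup>2)"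
    and k_per: "\<And>t. k (t + T) = k t" and k_bound: "\<And>s. s \<ge> 0 \<Longrightarrow> \<bar>k s\<bar> \<le> K"
    and close: "\<And>s. s \<ge> 0 \<Longrightarrow> \<bar>P s - c\<bar> + \<bar>Q s - k s\<bar> \<le> D"
    and small: "2 * h * D < 1"
  shows "asymp_stable2 P Q"
proof -
  have h: "h > 0" using form_lower[of 1 0] form_upper[of 1 0] m by simp
  have P_bound: "\<bar>P s\<bar> \<le> \<bar>c\<bar> + D" and Q_bound: "\<bar>Q s\<bar> \<le> K + D" if "s \<ge> 0" for s
    using close[OF that] k_bound[OF that] by linarith+
  define L where "L = 1 + (K + D) + 2 * (\<bar>c\<bar> + D)"
  define E where "E = exp (L * T)"
  define \<kappa> where "\<kappa> = (1 - 2 * h * D) * exp (- (L * T)) * T"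
  have \<kappa>: "\<kappa> > 0" unfolding \<kappa>_def using small T by simp
  show ?thesis
  proof (rule asymp_stable2I)
    show "E + E * E * h / m > 0" unfolding E_def using h m by (simp add: add_pos_nonneg)
    fix t0 y z assume t0: "0 \<le> t0" and sol: "sol2 P Q t0 y z"
    let ?N = "\<lambda>s. (y s)\<^sup>2 + (z s)\<^sup>2"
    let ?V = "\<lambda>s. p 0 * (y s)\<^sup>2 + 2 * q 0 * y s * z s + r 0 * (z s)\<^sup>2"
    have N_nonneg: "0 \<le> ?N s" for s by simp
    have E: "0 \<le> E" unfolding E_def by simp
    note window = sol2_energy_window_bounds[OF sol, where Pb = "\<bar>c\<bar> + D" and Qb = "K + D"
        and T = T, folded L_def E_def]
    have growth: "?N s \<le> E * ?N a" if "t0 \<le> a" "a \<le> s" "s \<le> a + T" for a s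
      using window(1) that t0 P_bound Q_bound by simp
    have decrease: "?V (real n * T + T) \<le> ?V (real n * T) - \<kappa> * ?N (real n * T)"
      if a: "t0 \<le> real n * T" for n
    proof -
      let ?a = "real n * T"
      have "\<bar>P s - c\<bar> + \<bar>Q s - k (s - ?a)\<bar> \<le> D" if "s \<in> {?a..?a + T}" for s
        using close[of s] periodic_shift_nat[of k T "s - ?a" n, OF k_per] that a t0 by simp
      moreover have "exp (- (L * T)) * ?N ?a \<le> ?N s" if "s \<in> {?a..?a + T}" for s
        using window(2) that a t0 P_bound Q_bound by simp
      ultimately have "?V (?a + T) \<le> ?V ?a - (1 - 2 * h * D) * exp (- (L * T)) * T * ?N ?a"
        using lyapunov_decrease_over_period[OF T dp dq dr ip iq ir row_bound less_imp_le[OF h]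
            sol2_has_derivative_within[OF sol a]] less_imp_le[OF small]
        unfolding per by blast
      then show ?thesis unfolding \<kappa>_def .
    qed
    note decay = periodic_decrease_imp_decay[where N = ?N and V = ?V and E = E and m = m and h = h
        and \<kappa> = \<kappa>]
    show "?N t \<le> (E + E * E * h / m) * ?N t0" if "t0 \<le> t" for t
      by (rule decay(1)) (assumption | rule T t0 N_nonneg growth E m h
          form_lower form_upper \<kappa> decrease that)+
    show "(?N \<longlongrightarrow> 0) at_top"
      by (rule decay(2)) (assumption | rule T t0 N_nonneg growth E m h
          form_lower form_upper \<kappa> decrease)+
  qed
qed

section \<open>The real entries of the Lyapunov matrix\<close>

lemma norm_vec2: "norm (x :: complex^2) = sqrt ((cmod (x$1))\<^sup>2 + (cmod (x$2))\<^sup>2)"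
  by (simp add: norm_vec_def L2_set_def sum_2)

lemma spec_norm_nonneg: "spec_norm M \<ge> 0"
  unfolding spec_norm_def by (rule onorm_pos_le) simp

lemma spec_norm_le_4_norm: "spec_norm (M :: complex^2^2) \<le> 4 * norm M"
  unfolding spec_norm_def
proof (rule onorm_le)
  fix x :: "complex^2"
  have entry: "norm (M $ i $ j * x $ j) \<le> norm M * norm x" for i j
  proof -
    have "norm (M $ i $ j) \<le> norm M"
      using Finite_Cartesian_Product.norm_nth_le[of "M $ i" j] Finite_Cartesian_Product.norm_nth_le[of M i] by linarith
    then show ?thesis unfolding norm_mult by (intro mult_mono Finite_Cartesian_Product.norm_nth_le) auto
  qed
  have "norm (M *v x) \<le> (\<Sum>i\<in>UNIV. norm ((M *v x) $ i))"
    unfolding norm_vec_def by (rule L2_set_le_sum) auto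
  also have "\<dots> \<le> (\<Sum>i\<in>(UNIV::2 set). \<Sum>j\<in>(UNIV::2 set). norm (M $ i $ j * x $ j))"
    unfolding matrix_vector_mult_def by (intro sum_mono) (simp add: norm_sum)
  also have "\<dots> \<le> (\<Sum>i\<in>(UNIV::2 set). \<Sum>j\<in>(UNIV::2 set). norm M * norm x)"
    by (intro sum_mono entry)
  finally show "norm (M *v x) \<le> 4 * norm M * norm x" by simp
qed

lemma spec_norm_le_SUP:
  fixes H :: "real \<Rightarrow> complex^2^2"
  assumes "compact S" "continuous_on S H" "t \<in> S"
  shows "spec_norm (H t) \<le> (SUP s\<in>S. spec_norm (H s))"
proof -
  obtain B where B: "\<And>s. s \<in> S \<Longrightarrow> norm (H s) \<le> B"
    using compact_imp_bounded[OF compact_continuous_image[OF assms(2,1)]]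
    unfolding Elementary_Metric_Spaces.bounded_iff by blast
  show ?thesis
    using assms(3) by (intro cSUP_upper bdd_aboveI2[of _ _ "4 * B"])
      (auto intro: order_trans[OF spec_norm_le_4_norm] simp: B)
qed

lemma Re_rows_le_spec_norm:
  fixes M :: "complex^2^2" and u v :: real
  shows "(Re (M$1$1) * u + Re (M$1$2) * v)\<^sup>2 + (Re (M$2$1) * u + Re (M$2$2) * v)\<^sup>2
          \<le> (spec_norm M)\<^sup>2 * (u\<^sup>2 + v\<^sup>2)"
proof -
  define w :: "complex^2" where "w = vector [complex_of_real u, complex_of_real v]"
  have Mw: "(M *v w) $ 1 = M$1$1 * u + M$1$2 * v" "(M *v w) $ 2 = M$2$1 * u + M$2$2 * v"
    unfolding w_def matrix_vector_mult_def by (simp_all add: sum_2)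
  have "(Re ((M *v w) $ i))\<^sup>2 \<le> (cmod ((M *v w) $ i))\<^sup>2" for i
    using abs_Re_le_cmod[of "(M *v w) $ i"] by (simp add: abs_le_square_iff[symmetric])
  from add_mono[OF this[of 1] this[of 2]]
  have "(Re (M$1$1) * u + Re (M$1$2) * v)\<^sup>2 + (Re (M$2$1) * u + Re (M$2$2) * v)\<^sup>2
      \<le> (norm (M *v w))\<^sup>2"
    unfolding norm_vec2 Mw by simp
  also have "\<dots> \<le> (spec_norm M * norm w)\<^sup>2"
    unfolding spec_norm_def
    by (intro power_mono onorm) auto
  also have "\<dots> = (spec_norm M)\<^sup>2 * (u\<^sup>2 + v\<^sup>2)"
    unfolding w_def norm_vec2 by (simp add: power_mult_distrib)
  finally show ?thesis .
qed

lemma hermitian_Re_sym: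
  fixes M :: "complex^2^2"
  assumes "hermitian M"
  shows "Re (M$2$1) = Re (M$1$2)"
proof -
  have "adj M $ 2 $ 1 = M $ 2 $ 1" using assms unfolding hermitian_def by simp
  then have "cnj (M$1$2) = M$2$1" unfolding adj_def by simp
  then have "Re (cnj (M$1$2)) = Re (M$2$1)" by simp
  then show ?thesis by simp
qed

lemma hermitian_Re_form_bounds:
  fixes M :: "complex^2^2" and u v :: real
  assumes herm: "hermitian M" and bound: "spec_norm M \<le> h"
  shows "\<bar>Re (M$1$2) * u + Re (M$2$2) * v\<bar> \<le> h * sqrt (u\<^sup>2 + v\<^sup>2)"
    and "Re (M$1$1) * u\<^sup>2 + 2 * Re (M$1$2) * u * v + Re (M$2$2) * v\<^sup>2 \<le> h * (u\<^sup>2 + v\<^sup>2)"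
proof -
  define X where "X = Re (M$1$1) * u + Re (M$1$2) * v"
  define Y where "Y = Re (M$1$2) * u + Re (M$2$2) * v"
  have h: "h \<ge> 0" using spec_norm_nonneg[of M] bound by linarith
  have "(spec_norm M)\<^sup>2 \<le> h\<^sup>2" using bound spec_norm_nonneg[of M] by (simp add: power_mono)
  then have XY: "X\<^sup>2 + Y\<^sup>2 \<le> h\<^sup>2 * (u\<^sup>2 + v\<^sup>2)"
    using Re_rows_le_spec_norm[of M u v] mult_right_mono[of "(spec_norm M)\<^sup>2" "h\<^sup>2" "u\<^sup>2 + v\<^sup>2"]
    unfolding X_def Y_def hermitian_Re_sym[OF herm] by simp
  have "\<bar>Y\<bar> = sqrt (Y\<^sup>2)" by simp
  also have "\<dots> \<le> sqrt (h\<^sup>2 * (u\<^sup>2 + v\<^sup>2))" using XY zero_le_power2[of X] by (intro real_sqrt_le_mono) linarith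
  also have "\<dots> = h * sqrt (u\<^sup>2 + v\<^sup>2)" using h by (simp add: real_sqrt_mult)
  finally show "\<bar>Re (M$1$2) * u + Re (M$2$2) * v\<bar> \<le> h * sqrt (u\<^sup>2 + v\<^sup>2)" unfolding Y_def .
  have "(u * X + v * Y)\<^sup>2 = (u\<^sup>2 + v\<^sup>2) * (X\<^sup>2 + Y\<^sup>2) - (u * Y - v * X)\<^sup>2"
    by (simp add: power2_eq_square algebra_simps)
  also have "\<dots> \<le> (u\<^sup>2 + v\<^sup>2) * (h\<^sup>2 * (u\<^sup>2 + v\<^sup>2))"
  proof -
    have "(u\<^sup>2 + v\<^sup>2) * (X\<^sup>2 + Y\<^sup>2) \<le> (u\<^sup>2 + v\<^sup>2) * (h\<^sup>2 * (u\<^sup>2 + v\<^sup>2))"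
      using XY by (intro mult_left_mono) auto
    then show ?thesis using zero_le_power2[of "u * Y - v * X"] by linarith
  qed
  also have "\<dots> = (h * (u\<^sup>2 + v\<^sup>2))\<^sup>2" by (simp add: power2_eq_square algebra_simps)
  finally have "\<bar>u * X + v * Y\<bar> \<le> h * (u\<^sup>2 + v\<^sup>2)"
    using h by (simp add: abs_le_square_iff[symmetric])
  then show "Re (M$1$1) * u\<^sup>2 + 2 * Re (M$1$2) * u * v + Re (M$2$2) * v\<^sup>2 \<le> h * (u\<^sup>2 + v\<^sup>2)"
    unfolding X_def Y_def by (simp add: power2_eq_square algebra_simps)
qed

lemma positive_quadratic_form_coercive:
  fixes p q r :: real
  assumes pos: "\<And>u v. u \<noteq> 0 \<or> v \<noteq> 0 \<Longrightarrow> p * u\<^sup>2 + 2 * q * u * v + r * v\<^sup>2 > 0"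
  obtains m where "m > 0" "\<And>u v. m * (u\<^sup>2 + v\<^sup>2) \<le> p * u\<^sup>2 + 2 * q * u * v + r * v\<^sup>2"
proof -
  have p: "p > 0" using pos[of 1 0] by simp
  have r: "r > 0" using pos[of 0 1] by simp
  have "p * (-q)\<^sup>2 + 2 * q * (-q) * p + r * p\<^sup>2 > 0" using pos[of "-q" p] p by simp
  then have "p * (p * r - q\<^sup>2) > 0" by (simp add: power2_eq_square algebra_simps)
  then have det: "p * r - q\<^sup>2 > 0" using p by (simp add: zero_less_mult_iff)
  text \<open>With this \<open>m\<close>, the shifted form with diagonal \<open>p - m, r - m\<close> has determinant \<open>m\<^sup>2\<close>.\<close>
  define m where "m = (p * r - q\<^sup>2) / (p + r)"
  have m: "m > 0" unfolding m_def using det p r by simp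
  have pm: "p - m > 0"
  proof -
    have "p - m = (p\<^sup>2 + q\<^sup>2) / (p + r)" unfolding m_def using p r
      by (simp add: field_simps power2_eq_square)
    then show ?thesis using p r by (simp add: add_pos_nonneg)
  qed
  have det_m: "(p - m) * (r - m) - q\<^sup>2 = m\<^sup>2"
  proof -
    have "m * (p + r) = p * r - q\<^sup>2" unfolding m_def using p r by simp
    then show ?thesis by (simp add: power2_eq_square algebra_simps)
  qed
  have "m * (u\<^sup>2 + v\<^sup>2) \<le> p * u\<^sup>2 + 2 * q * u * v + r * v\<^sup>2" for u v
  proof -
    have "(p - m) * ((p - m) * u\<^sup>2 + 2 * q * u * v + (r - m) * v\<^sup>2)
        = ((p - m) * u + q * v)\<^sup>2 + ((p - m) * (r - m) - q\<^sup>2) * v\<^sup>2"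
      by (simp add: power2_eq_square algebra_simps)
    also have "\<dots> \<ge> 0" unfolding det_m by simp
    finally have "(p - m) * u\<^sup>2 + 2 * q * u * v + (r - m) * v\<^sup>2 \<ge> 0"
      using pm by (simp add: zero_le_mult_iff)
    then show ?thesis by (simp add: algebra_simps)
  qed
  with m that show ?thesis by blast
qed

lemma pos_def_Re_form_coercive:
  fixes M :: "complex^2^2"
  assumes pd: "pos_def M"
  obtains m where "m > 0"
    "\<And>u v. m * (u\<^sup>2 + v\<^sup>2) \<le> Re (M$1$1) * u\<^sup>2 + 2 * Re (M$1$2) * u * v + Re (M$2$2) * v\<^sup>2"
proof -
  have "Re (M$1$1) * u\<^sup>2 + 2 * Re (M$1$2) * u * v + Re (M$2$2) * v\<^sup>2 > 0"
    if nz: "u \<noteq> 0 \<or> v \<noteq> 0" for u v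
  proof -
    define w :: "complex^2" where "w = vector [complex_of_real u, complex_of_real v]"
    have "w \<noteq> 0" using nz unfolding w_def by (auto simp: vec_eq_iff forall_2)
    with pd have "Re (\<Sum>i\<in>UNIV. cnj (w $ i) * (M *v w) $ i) > 0" unfolding pos_def_def by blast
    then show ?thesis
      using hermitian_Re_sym[of M] pd unfolding pos_def_def w_def matrix_vector_mult_def
      by (simp add: sum_2 power2_eq_square algebra_simps)
  qed
  from positive_quadratic_form_coercive[OF this] that show ?thesis by blast
qed

lemma lyapunov_eq_Re_entries:
  fixes M M' :: "complex^2^2"
  assumes herm: "hermitian M"
    and eq: "M' + M ** Amat alpha beta phi t mu + adj (Amat alpha beta phi t mu) ** M = - mat 1"
  shows "Re (M'$1$1) = -1 + 2 * Re (M$1$2) * (beta * mu^2 + mu * phi t)"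
    and "Re (M'$1$2) = - Re (M$1$1) + Re (M$1$2) * (alpha * mu) + Re (M$2$2) * (beta * mu^2 + mu * phi t)"
    and "Re (M'$2$2) = -1 - 2 * Re (M$1$2) + 2 * Re (M$2$2) * (alpha * mu)"
proof -
  have e: "Re ((M' + M ** Amat alpha beta phi t mu + adj (Amat alpha beta phi t mu) ** M) $ i $ j)
         = Re ((- mat 1 :: complex^2^2) $ i $ j)" for i j
    using eq by simp
  note defs = matrix_matrix_mult_def adj_def Amat_def mat_def sum_2 hermitian_Re_sym[OF herm]
  show "Re (M'$1$1) = -1 + 2 * Re (M$1$2) * (beta * mu^2 + mu * phi t)"
    using e[of 1 1] by (simp add: defs algebra_simps)
  show "Re (M'$1$2) = - Re (M$1$1) + Re (M$1$2) * (alpha * mu) + Re (M$2$2) * (beta * mu^2 + mu * phi t)"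
    using e[of 1 2] by (simp add: defs algebra_simps)
  show "Re (M'$2$2) = -1 - 2 * Re (M$1$2) + 2 * Re (M$2$2) * (alpha * mu)"
    using e[of 2 2] by (simp add: defs algebra_simps)
qed

lemma has_vector_derivative_Re_entry:
  fixes H :: "real \<Rightarrow> complex^2^2"
  assumes "(H has_vector_derivative H') (at t within S)"
  shows "((\<lambda>t. Re (H t $ i $ j)) has_real_derivative Re (H' $ i $ j)) (at t within S)"
proof -
  have "bounded_linear (\<lambda>M::complex^2^2. Re (M $ i $ j))"
    using bounded_linear_compose[OF bounded_linear_Re
        bounded_linear_compose[OF bounded_linear_vec_nth[of j] bounded_linear_vec_nth[of i]]]
    by (simp add: o_def)
  from bounded_linear.has_vector_derivative[OF this assms] show ?thesis
    by (simp add: has_real_derivative_iff_has_vector_derivative)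
qed

lemma abs_le_SUP_abs:
  fixes f :: "'a \<Rightarrow> real"
  assumes "bounded (f ` S)" "x \<in> S"
  shows "\<bar>f x\<bar> \<le> (SUP t\<in>S. \<bar>f t\<bar>)"
proof -
  obtain B where "\<And>t. t \<in> S \<Longrightarrow> \<bar>f t\<bar> \<le> B"
    using assms(1) unfolding Elementary_Metric_Spaces.bounded_iff by force
  then show ?thesis using assms(2) by (intro cSUP_upper bdd_aboveI2[of _ _ B]) auto
qed

lemma lyapunov_matrix_imp_asymp_stable2:
  fixes H H' :: "real \<Rightarrow> complex^2^2" and phi P Q :: "real \<Rightarrow> real"
  assumes T: "T > 0"
    and phi_cont: "continuous_on UNIV phi" and phi_per: "\<And>t. phi (t + T) = phi t"
    and H_herm: "\<And>t. t \<in> {0..T} \<Longrightarrow> hermitian (H t)"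
    and H_deriv: "\<And>t. t \<in> {0..T} \<Longrightarrow> (H has_vector_derivative H' t) (at t within {0..T})"
    and H_eq: "\<And>t. t \<in> {0..T} \<Longrightarrow>
                 H' t + H t ** Amat alpha beta phi t mu + adj (Amat alpha beta phi t mu) ** H t
                   = - mat 1"
    and H_bd: "H 0 = H T" "pos_def (H 0)"
    and H_bound: "\<And>t. t \<in> {0..T} \<Longrightarrow> spec_norm (H t) \<le> h"
    and close: "\<And>s. s \<ge> 0 \<Longrightarrow> \<bar>P s - alpha * mu\<bar> + \<bar>Q s - (beta * mu\<^sup>2 + mu * phi s)\<bar> \<le> D"
    and small: "2 * h * D < 1"
  shows "asymp_stable2 P Q"
proof -
  define k where "k t = beta * mu\<^sup>2 + mu * phi t" for t
  have T0: "0 \<in> {0..T}" using T by simp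
  have deriv: "((\<lambda>t. Re (H t $ i $ j)) has_real_derivative Re (H' s $ i $ j)) (at s within {0..T})"
    if "s \<in> {0..T}" for s i j
    using has_vector_derivative_Re_entry[OF H_deriv[OF that]] .
  note entries = lyapunov_eq_Re_entries[OF H_herm H_eq, folded k_def]
  note bounds = hermitian_Re_form_bounds[OF H_herm H_bound]
  have per: "Re (H T $ i $ j) = Re (H 0 $ i $ j)" for i j using H_bd(1) by simp
  obtain m where m: "m > 0" and form_lower:
    "\<And>u v. m * (u\<^sup>2 + v\<^sup>2) \<le> Re (H 0$1$1) * u\<^sup>2 + 2 * Re (H 0$1$2) * u * v + Re (H 0$2$2) * v\<^sup>2"
    using pos_def_Re_form_coercive[OF H_bd(2)] by blast
  have k_cont: "continuous_on UNIV k" unfolding k_def by (intro continuous_intros phi_cont)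
  have k_per: "k (t + T) = k t" for t unfolding k_def using phi_per by simp
  obtain K where K: "\<And>s. s \<ge> 0 \<Longrightarrow> \<bar>k s\<bar> \<le> K"
    using periodic_continuous_bounded[OF T k_cont k_per] by blast
  show ?thesis
    by (rule periodic_lyapunov_form_imp_asymp_stable2[where p = "\<lambda>t. Re (H t $ 1 $ 1)"
        and q = "\<lambda>t. Re (H t $ 1 $ 2)" and r = "\<lambda>t. Re (H t $ 2 $ 2)"
        and p' = "\<lambda>t. Re (H' t $ 1 $ 1)" and q' = "\<lambda>t. Re (H' t $ 1 $ 2)"
        and r' = "\<lambda>t. Re (H' t $ 2 $ 2)" and k = k and c = "alpha * mu"
        and m = m and K = K and D = D])
      (assumption | rule T T0 deriv entries per bounds m form_lower
        k_per K close[folded k_def] small)+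
qed

theorem theorem5:
  fixes T alpha beta mu0 mu dalpha dbeta :: real
    and phi dphi :: "real \<Rightarrow> real"
    and H H' :: "real \<Rightarrow> complex^2^2"
  assumes T: "T > 0" and alpha: "alpha > 0" and beta: "beta < 0"
    and phi_cont: "continuous_on UNIV phi"
    and phi_per: "\<And>t. phi (t + T) = phi t"
    and phi_mean: "integral {0..T} phi = 0"
    and ineq: "(1/T) * integral {0..T} (\<lambda>\<tau>. (integral {0..\<tau>} phi)^2)
               > ((1/T) * integral {0..T} (\<lambda>\<tau>. \<tau> * phi \<tau>))^2 - beta"
    and mu0: "mu0 > 0"
    and mu0_stable: "\<And>m. 0 < m \<Longrightarrow> m \<le> mu0 \<Longrightarrow>
                        asymp_stable2 (\<lambda>t. alpha * m) (\<lambda>t. beta * m^2 + m * phi t)"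
    and mu: "0 < mu" "mu \<le> mu0"
    and H_herm: "\<And>t. t \<in> {0..T} \<Longrightarrow> hermitian (H t)"
    and H_deriv: "\<And>t. t \<in> {0..T} \<Longrightarrow> (H has_vector_derivative H' t) (at t within {0..T})"
    and H_eq: "\<And>t. t \<in> {0..T} \<Longrightarrow>
                 H' t + H t ** Amat alpha beta phi t mu + adj (Amat alpha beta phi t mu) ** H t
                   = - mat 1"
    and H_bd: "H 0 = H T" "pos_def (H 0)"
    and dphi_cont: "continuous_on {0..} dphi"
    and dphi_bdd: "bounded (dphi ` {0..})"
    and small1: "mu * (SUP t\<in>{0..}. \<bar>dphi t\<bar>)
                   < 1 / (4 * (SUP t\<in>{0..T}. spec_norm (H t)))"
    and small2: "mu * (\<bar>dbeta\<bar> * mu + \<bar>dalpha\<bar>)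
                   < 1 / (4 * (SUP t\<in>{0..T}. spec_norm (H t)))"
  shows "asymp_stable2 (\<lambda>t. (alpha + dalpha) * mu)
           (\<lambda>t. (beta + dbeta) * mu^2 + mu * (phi t + dphi t))"
  \<comment> \<open>The hypotheses on \<open>alpha\<close>, \<open>beta\<close>, the averages of \<open>phi\<close> and \<open>mu0\<close> only serve to
    guarantee that \<open>H\<close> exists.\<close>
proof -
  define h where "h = (SUP t\<in>{0..T}. spec_norm (H t))"
  define sp where "sp = (SUP t\<in>{0..}. \<bar>dphi t\<bar>)"
  define D where "D = mu * sp + mu * (\<bar>dbeta\<bar> * mu + \<bar>dalpha\<bar>)"
  have sp: "\<bar>dphi t\<bar> \<le> sp" if "t \<ge> 0" for t
    unfolding sp_def using abs_le_SUP_abs[OF dphi_bdd] that by simp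
  have "continuous_on {0..T} H"
    using H_deriv has_vector_derivative_continuous continuous_on_eq_continuous_within by blast
  then have H_bound: "spec_norm (H t) \<le> h" if "t \<in> {0..T}" for t
    unfolding h_def using that by (intro spec_norm_le_SUP) auto
  have "0 \<le> mu * sp" using mu sp[of 0] by simp
  have "h > 0"
  proof (rule ccontr)
    assume "\<not> h > 0"
    then have "1 / (4 * h) \<le> 0" by (simp add: divide_nonpos_nonneg)
    with small1 \<open>0 \<le> mu * sp\<close> show False unfolding h_def[symmetric] sp_def[symmetric] by linarith
  qed
  then have small: "2 * h * D < 1"
    using small1 small2 unfolding D_def h_def[symmetric] sp_def[symmetric] by (simp add: field_simps)
  have "\<bar>(alpha + dalpha) * mu - alpha * mu\<bar> + \<bar>(beta + dbeta) * mu\<^sup>2 + mu * (phi s + dphi s)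
          - (beta * mu\<^sup>2 + mu * phi s)\<bar> \<le> D" if "s \<ge> 0" for s
    using sp[OF that] mu unfolding D_def
    by (simp add: algebra_simps abs_mult power2_eq_square order_trans[OF abs_triangle_ineq]
        add_mono mult_left_mono)
  from lyapunov_matrix_imp_asymp_stable2[OF T phi_cont phi_per H_herm H_deriv H_eq H_bd
      H_bound this small]
  show ?thesis .
qed

end
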